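(* Let $\mathcal{D}\subset Y\times Y$. The function $z\mapsto\operatorname{dist}(z,\mathcal{D})$ is $(p,q)$-coercive if and only if there are $c_1\in\mathbb{R}$ and $c_2>0$ such that $\mathcal{D}\subset\{(\epsilon,\tilde\sigma)\in Y\times Y: c_1\,\epsilon\cdot\tilde\sigma+c_2>|\epsilon|^p+|\tilde\sigma|^q\}$.
   Context: $1<p<\infty$, $q=p/(p-1)$, $Y=\{A\in\mathbb{R}^{d\times d}:A=A^T,\operatorname{tr}A=0\}$ with Frobenius product $\cdot$ and norm $|\cdot|$. $\operatorname{dist}((\epsilon,\tilde\sigma),\mathcal{D})=\inf_{(\epsilon',\tilde\sigma')\in\mathcal{D}}\big(\frac1p|\epsilon-\epsilon'|^p+\frac1q|\tilde\sigma-\tilde\sigma'|^q\big)$. A function $F:Y\times Y\to\mathbb{R}$ is $(p,q)$-coercive if there exist $C_1,C_2>0$, $\gamma\in\mathbb{R}$ with $F(\epsilon,\tilde\sigma)\ge C_1(|\epsilon|^p+|\tilde\sigma|^q)-C_2-\gamma\,\epsilon\cdot\tilde\sigma$ for all $(\epsilon,\tilde\sigma)$. *)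

theory Defs
  imports "HOL-Analysis.Analysis" "HOL-Library.Extended_Real"
begin

text \<open>Y: symmetric trace-free real d x d matrices. On real^'d^'d, inner is the
Frobenius product and norm the Frobenius norm.\<close>

definition Ysym :: "(real^'d^'d) set" where
  "Ysym = {A. transpose A = A \<and> trace A = 0}"

text \<open>Distance to a set D, valued in extended reals (infimum of the empty set is +infinity).\<close>
definition distD :: "real \<Rightarrow> real \<Rightarrow> ((real^'d^'d) \<times> (real^'d^'d)) set
    \<Rightarrow> (real^'d^'d) \<times> (real^'d^'d) \<Rightarrow> ereal" where
  "distD p q D z = (INF w\<in>D. ereal ((1/p) * norm (fst z - fst w) powr p
                                   + (1/q) * norm (snd z - snd w) powr q))"

definition pq_coercive :: "real \<Rightarrow> real \<Rightarrow>
    ((real^'d^'d) \<times> (real^'d^'d) \<Rightarrow> ereal) \<Rightarrow> bool" where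
  "pq_coercive p q F \<longleftrightarrow> (\<exists>C1 C2 \<gamma>. C1 > 0 \<and> C2 > 0 \<and>
     (\<forall>e\<in>Ysym. \<forall>s\<in>Ysym.
        F (e, s) \<ge> ereal (C1 * (norm e powr p + norm s powr q) - C2 - \<gamma> * (e \<bullet> s))))"

end

(*
  Points of D are at distance 0 from D, so coercivity of the distance forces
  C1 (|e|^p + |s|^q) <= C2 + gamma e.s on D, which is the sublevel condition
  after dividing by C1.

  Conversely, fix z = (e,s) and (e',s') in D. Expanding e.s around e'.s'
  produces the cross terms |e-e'||s-s'|, |e-e'||s'| and |e'||s-s'|; weighted
  Young inequalities split them into a part in |e-e'|^p, |s-s'|^q, dominated by
  the distance term, and a part in |e'|^p, |s'|^q, absorbed by k times the
  sublevel inequality of (e',s'). Such a multiplier k exists because the Young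
  weights grow like k^p and k^q, which beat k as k -> 0.
*)

theory Submission
  imports Defs
begin

lemma Youngs_inequality_scaled:
  fixes p q a b t :: real
  assumes "p > 1" "q > 1" "1/p + 1/q = 1" "a \<ge> 0" "b \<ge> 0" "t > 0"
  shows "a * b \<le> t * a powr p + t powr (1 - q) * b powr q"
proof -
  have ab: "a * b = (t powr (1/p) * a) * (t powr (-1/p) * b)"
    using assms by (simp add: powr_minus_divide field_simps powr_add[symmetric])
  have "-1/p * q = 1 - q"
    using assms by (simp add: field_simps)
  then have "a * b \<le> t * a powr p / p + t powr (1 - q) * b powr q / q"
    using Youngs_inequality[of p q "t powr (1/p) * a" "t powr (-1/p) * b"] assms
    by (simp add: ab powr_mult powr_powr)
  also have "\<dots> \<le> t * a powr p + t powr (1 - q) * b powr q"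
    using assms by (intro add_mono) (simp_all add: divide_le_eq mult_le_cancel_left1 not_less)
  finally show ?thesis .
qed

lemma norm_add_powr_le:
  fixes x y :: "'a::real_normed_vector" and r :: real
  assumes "r \<ge> 0"
  shows "norm (x + y) powr r \<le> 2 powr r * (norm x powr r + norm y powr r)"
proof -
  have "norm (x + y) powr r \<le> (2 * max (norm x) (norm y)) powr r"
    using norm_triangle_ineq[of x y] assms by (intro powr_mono2) auto
  also have "\<dots> = 2 powr r * max (norm x) (norm y) powr r"
    by (simp add: powr_mult)
  also have "max (norm x) (norm y) powr r \<le> norm x powr r + norm y powr r"
    by (simp add: max_def)
  finally show ?thesis by simp
qed

lemma norm_powr_sum_le_shifted:
  fixes e s e' s' :: "'a::real_normed_vector" and p q :: real
  assumes "p \<ge> 0" "q \<ge> 0"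
  shows "norm e powr p + norm s powr q \<le> (2 powr p + 2 powr q) *
    (norm (e - e') powr p + norm (s - s') powr q + norm e' powr p + norm s' powr q)"
proof -
  let ?M = "2 powr p + 2 powr q"
  have "norm e powr p \<le> 2 powr p * (norm (e - e') powr p + norm e' powr p)"
    using norm_add_powr_le[of p "e - e'" e'] assms by simp
  also have "\<dots> \<le> ?M * (norm (e - e') powr p + norm e' powr p)"
    by (intro mult_right_mono) auto
  finally have e: "norm e powr p \<le> ?M * (norm (e - e') powr p + norm e' powr p)" .
  have "norm s powr q \<le> 2 powr q * (norm (s - s') powr q + norm s' powr q)"
    using norm_add_powr_le[of q "s - s'" s'] assms by simp
  also have "\<dots> \<le> ?M * (norm (s - s') powr q + norm s' powr q)"
    by (intro mult_right_mono) auto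
  finally have s: "norm s powr q \<le> ?M * (norm (s - s') powr q + norm s' powr q)" .
  show ?thesis
    using e s by (simp add: algebra_simps)
qed

lemma inner_diff_inner_le:
  fixes x y x' y' :: "'a::real_inner"
  shows "\<bar>x \<bullet> y - x' \<bullet> y'\<bar>
    \<le> norm (x - x') * norm (y - y') + norm (x - x') * norm y' + norm x' * norm (y - y')"
proof -
  have "x \<bullet> y - x' \<bullet> y' = (x - x') \<bullet> (y - y') + (x - x') \<bullet> y' + x' \<bullet> (y - y')"
    by (simp add: inner_diff_left inner_diff_right)
  then have "\<bar>x \<bullet> y - x' \<bullet> y'\<bar> \<le> \<bar>(x - x') \<bullet> (y - y')\<bar> + \<bar>(x - x') \<bullet> y'\<bar> + \<bar>x' \<bullet> (y - y')\<bar>"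
    by linarith
  also have "\<dots> \<le> norm (x - x') * norm (y - y') + norm (x - x') * norm y' + norm x' * norm (y - y')"
    by (intro add_mono Cauchy_Schwarz_ineq2)
  finally show ?thesis .
qed

lemma cross_terms_le:
  fixes p q a b u v \<rho> \<delta> \<kappa> :: real
  assumes pq: "p > 1" "q > 1" "1/p + 1/q = 1"
    and nonneg: "a \<ge> 0" "b \<ge> 0" "u \<ge> 0" "v \<ge> 0" "\<rho> \<ge> 0"
    and \<delta>: "\<delta> > 0" "\<rho> \<le> \<delta>"
    and \<kappa>_q: "\<delta> powr (1 - q) * \<rho> powr q \<le> \<kappa>"
    and \<kappa>_p: "\<delta> powr (1 - p) * \<rho> powr p \<le> \<kappa>"
  shows "\<rho> * (a * b + a * v + u * b)
    \<le> 2 * \<delta> * (a powr p + b powr q) + \<kappa> * (u powr p + v powr q)"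
proof -
  have "a * b \<le> a powr p + b powr q"
    using Youngs_inequality_scaled[of p q a b 1] pq nonneg by simp
  then have ab: "\<rho> * (a * b) \<le> \<delta> * (a powr p + b powr q)"
    using \<delta> nonneg by (intro mult_mono) auto
  have "\<rho> * (a * v) = a * (\<rho> * v)"
    by simp
  also have "\<dots> \<le> \<delta> * a powr p + \<delta> powr (1 - q) * (\<rho> * v) powr q"
    using Youngs_inequality_scaled[of p q a "\<rho> * v" \<delta>] pq nonneg \<delta> by simp
  also have "\<delta> powr (1 - q) * (\<rho> * v) powr q = (\<delta> powr (1 - q) * \<rho> powr q) * v powr q"
    using nonneg by (simp add: powr_mult)
  also have "\<dots> \<le> \<kappa> * v powr q"
    using \<kappa>_q by (intro mult_right_mono) auto
  finally have av: "\<rho> * (a * v) \<le> \<delta> * a powr p + \<kappa> * v powr q" by simp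
  have "\<rho> * (u * b) = b * (\<rho> * u)"
    by simp
  also have "\<dots> \<le> \<delta> * b powr q + \<delta> powr (1 - p) * (\<rho> * u) powr p"
    using Youngs_inequality_scaled[of q p b "\<rho> * u" \<delta>] pq nonneg \<delta> by (simp add: add.commute)
  also have "\<delta> powr (1 - p) * (\<rho> * u) powr p = (\<delta> powr (1 - p) * \<rho> powr p) * u powr p"
    using nonneg by (simp add: powr_mult)
  also have "\<dots> \<le> \<kappa> * u powr p"
    using \<kappa>_p by (intro mult_right_mono) auto
  finally have ub: "\<rho> * (u * b) \<le> \<delta> * b powr q + \<kappa> * u powr p" by simp
  show ?thesis
    using ab av ub by (simp add: algebra_simps)
qed

lemma eventually_powr_le_half_at_right_0:
  fixes \<delta> c r :: real
  assumes "r > 1" "c \<ge> 0"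
  shows "\<forall>\<^sub>F k in at_right 0. \<delta> powr (1 - r) * (k * c) powr r \<le> k / 2"
proof -
  define K where "K = \<delta> powr (1 - r) * c powr r"
  have "((\<lambda>k::real. k powr (r - 1)) \<longlongrightarrow> 0) (at_right 0)"
    using assms by (intro tendsto_zero_powrI tendsto_ident_at)
      (auto intro: eventually_at_right_less[THEN eventually_mono])
  then have "((\<lambda>k. K * k powr (r - 1)) \<longlongrightarrow> 0) (at_right 0)"
    by (rule tendsto_mult_right_zero)
  then have "\<forall>\<^sub>F k in at_right 0. K * k powr (r - 1) < 1/2"
    by (rule order_tendstoD(2)) simp
  then show ?thesis
    using eventually_at_right_less
  proof eventually_elim
    case (elim k)
    have "(k * c) powr r = k * k powr (r - 1) * c powr r"
      using elim assms powr_add[of k 1 "r - 1"] by (simp add: powr_mult)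
    then have "\<delta> powr (1 - r) * (k * c) powr r = k * (K * k powr (r - 1))"
      by (simp add: K_def algebra_simps)
    also have "\<dots> \<le> k * (1/2)"
      using elim by (intro mult_left_mono) auto
    finally show ?case by simp
  qed
qed

lemma sublevel_point_coercive_estimate:
  fixes e s e' s' :: "'a::real_inner" and p q k \<delta> c1 c2 :: real
  assumes pq: "p > 1" "q > 1" "1/p + 1/q = 1"
    and k: "k > 0" "k / 2 + 2 * \<delta> \<le> min (1/p) (1/q)"
    and \<delta>: "\<delta> > 0" "k * \<bar>c1\<bar> \<le> \<delta>"
    and \<delta>_q: "\<delta> powr (1 - q) * (k * \<bar>c1\<bar>) powr q \<le> k / 2"
    and \<delta>_p: "\<delta> powr (1 - p) * (k * \<bar>c1\<bar>) powr p \<le> k / 2"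
    and sublevel: "norm e' powr p + norm s' powr q < c1 * (e' \<bullet> s') + c2"
  shows "k / (2 * (2 powr p + 2 powr q)) * (norm e powr p + norm s powr q) - k * c2 - k * c1 * (e \<bullet> s)
    \<le> norm (e - e') powr p / p + norm (s - s') powr q / q"
proof -
  define a b u v where "a = norm (e - e')" "b = norm (s - s')" "u = norm e'" "v = norm s'"
  define M :: real where "M = 2 powr p + 2 powr q"
  have nonneg: "a \<ge> 0" "b \<ge> 0" "u \<ge> 0" "v \<ge> 0"
    unfolding a_b_u_v_def by simp_all
  have "M > 0"
    unfolding M_def by (simp add: add_pos_pos)
  have dist: "min (1/p) (1/q) * (a powr p + b powr q) \<le> a powr p / p + b powr q / q"
  proof -
    have "min (1/p) (1/q) * a powr p \<le> 1/p * a powr p"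
      by (intro mult_right_mono) auto
    moreover have "min (1/p) (1/q) * b powr q \<le> 1/q * b powr q"
      by (intro mult_right_mono) auto
    ultimately show ?thesis
      by (simp add: distrib_left)
  qed
  have "k * c1 * (e' \<bullet> s') - k * c1 * (e \<bullet> s) \<le> \<bar>k * c1 * (e' \<bullet> s' - e \<bullet> s)\<bar>"
    by (simp add: right_diff_distrib)
  also have "\<dots> = k * \<bar>c1\<bar> * \<bar>e \<bullet> s - e' \<bullet> s'\<bar>"
    using k by (simp add: abs_mult abs_minus_commute)
  also have "\<dots> \<le> k * \<bar>c1\<bar> * (a * b + a * v + u * b)"
    unfolding a_b_u_v_def using k by (intro mult_left_mono inner_diff_inner_le) auto
  also have "\<dots> \<le> 2 * \<delta> * (a powr p + b powr q) + k / 2 * (u powr p + v powr q)"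
    using pq nonneg k \<delta> \<delta>_q \<delta>_p by (intro cross_terms_le) auto
  finally have cross: "k * c1 * (e' \<bullet> s') - k * c1 * (e \<bullet> s)
    \<le> 2 * \<delta> * (a powr p + b powr q) + k / 2 * (u powr p + v powr q)" .
  have "k / (2 * M) * (norm e powr p + norm s powr q)
    \<le> k / (2 * M) * (M * (a powr p + b powr q + u powr p + v powr q))"
    unfolding a_b_u_v_def M_def using pq k
    by (intro mult_left_mono norm_powr_sum_le_shifted) auto
  also have "\<dots> = k / 2 * (a powr p + b powr q + u powr p + v powr q)"
    using \<open>M > 0\<close> by simp
  finally have growth: "k / (2 * M) * (norm e powr p + norm s powr q)
    \<le> k / 2 * (a powr p + b powr q + u powr p + v powr q)" .
  have "k * (u powr p + v powr q) < k * c1 * (e' \<bullet> s') + k * c2"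
    using mult_strict_left_mono[OF sublevel k(1)] unfolding a_b_u_v_def by (simp add: algebra_simps)
  moreover have "(k / 2 + 2 * \<delta>) * (a powr p + b powr q) \<le> min (1/p) (1/q) * (a powr p + b powr q)"
    using k by (intro mult_right_mono) auto
  ultimately show ?thesis
    using dist cross growth unfolding a_b_u_v_def[symmetric] M_def[symmetric]
    by (simp add: algebra_simps)
qed

lemma sublevel_imp_pq_coercive_distD:
  fixes D :: "((real^'d^'d) \<times> (real^'d^'d)) set" and p q c1 c2 :: real
  assumes pq: "p > 1" "q > 1" "1/p + 1/q = 1" and "c2 > 0"
    and sublevel: "\<And>e s. (e, s) \<in> D \<Longrightarrow> norm e powr p + norm s powr q < c1 * (e \<bullet> s) + c2"
  shows "pq_coercive p q (distD p q D)"
proof -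
  define m where "m = min (1/p) (1/q)"
  have "m > 0"
    using pq unfolding m_def by simp
  have "((\<lambda>k. k) \<longlongrightarrow> 0) (at_right (0::real))" "((\<lambda>k. k * \<bar>c1\<bar>) \<longlongrightarrow> 0) (at_right (0::real))"
    by (intro tendsto_mult_left_zero tendsto_ident_at)+
  then have "\<forall>\<^sub>F k in at_right 0. 0 < k \<and> k < m \<and> k * \<bar>c1\<bar> < m / 4
      \<and> (m / 4) powr (1 - q) * (k * \<bar>c1\<bar>) powr q \<le> k / 2
      \<and> (m / 4) powr (1 - p) * (k * \<bar>c1\<bar>) powr p \<le> k / 2"
    using \<open>m > 0\<close> pq
    by (intro eventually_conj eventually_at_right_less eventually_powr_le_half_at_right_0
        order_tendstoD(2)) auto
  then obtain k where k: "0 < k" "k < m" "k * \<bar>c1\<bar> < m / 4"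
      "(m / 4) powr (1 - q) * (k * \<bar>c1\<bar>) powr q \<le> k / 2"
      "(m / 4) powr (1 - p) * (k * \<bar>c1\<bar>) powr p \<le> k / 2"
    using eventually_happens[of _ "at_right (0::real)"] by auto
  have k_le: "k / 2 + 2 * (m / 4) \<le> min (1/p) (1/q)"
    using k(2) unfolding m_def[symmetric] by simp
  have "ereal (k / (2 * (2 powr p + 2 powr q)) * (norm e powr p + norm s powr q)
      - k * c2 - k * c1 * (e \<bullet> s)) \<le> distD p q D (e, s)" for e s :: "real^'d^'d"
    unfolding distD_def
  proof (rule INF_greatest, clarify)
    fix e' s' assume "(e', s') \<in> D"
    then have "k / (2 * (2 powr p + 2 powr q)) * (norm e powr p + norm s powr q)
        - k * c2 - k * c1 * (e \<bullet> s) \<le> norm (e - e') powr p / p + norm (s - s') powr q / q"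
      using k \<open>m > 0\<close>
      by (intro sublevel_point_coercive_estimate[OF pq k(1) k_le] sublevel) auto
    then show "ereal (k / (2 * (2 powr p + 2 powr q)) * (norm e powr p + norm s powr q)
        - k * c2 - k * c1 * (e \<bullet> s))
      \<le> ereal (1 / p * norm (fst (e, s) - fst (e', s')) powr p
        + 1 / q * norm (snd (e, s) - snd (e', s')) powr q)"
      by simp
  qed
  then show ?thesis
    unfolding pq_coercive_def using k \<open>c2 > 0\<close>
    by (intro exI[of _ "k / (2 * (2 powr p + 2 powr q))"] exI[of _ "k * c2"] exI[of _ "k * c1"])
      (auto simp: add_pos_pos)
qed

lemma distD_le_0:
  assumes "z \<in> D"
  shows "distD p q D z \<le> 0"
  unfolding distD_def using assms by (rule INF_lower2) (simp add: zero_ereal_def)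

lemma pq_coercive_distD_imp_sublevel:
  fixes D :: "((real^'d^'d) \<times> (real^'d^'d)) set" and p q :: real
  assumes "pq_coercive p q (distD p q D)" and "D \<subseteq> Ysym \<times> Ysym"
  obtains c1 c2
  where "\<And>e s. (e, s) \<in> D \<Longrightarrow> norm e powr p + norm s powr q < c1 * (e \<bullet> s) + c2"
    and "c2 > 0"
proof -
  obtain C1 C2 \<gamma> where C: "C1 > 0" "C2 > 0"
    and coercive: "\<And>e s. e \<in> Ysym \<Longrightarrow> s \<in> Ysym \<Longrightarrow>
      ereal (C1 * (norm e powr p + norm s powr q) - C2 - \<gamma> * (e \<bullet> s)) \<le> distD p q D (e, s)"
    using assms(1) unfolding pq_coercive_def by blast
  have bound: "norm e powr p + norm s powr q < \<gamma> / C1 * (e \<bullet> s) + (C2 / C1 + 1)"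
    if "(e, s) \<in> D" for e s
  proof -
    have "ereal (C1 * (norm e powr p + norm s powr q) - C2 - \<gamma> * (e \<bullet> s)) \<le> 0"
      using coercive[of e s] distD_le_0[OF that] that assms(2) by (blast intro: order_trans)
    then have "norm e powr p + norm s powr q \<le> (C2 + \<gamma> * (e \<bullet> s)) / C1"
      using C by (simp add: field_simps zero_ereal_def)
    also have "\<dots> < \<gamma> / C1 * (e \<bullet> s) + (C2 / C1 + 1)"
      by (simp add: add_divide_distrib)
    finally show ?thesis .
  qed
  have "C2 / C1 + 1 > 0"
    using C by (simp add: add_pos_pos)
  then show ?thesis
    using that bound by blast
qed

theorem lemma5p9:
  fixes p q :: real and D :: "((real^'d^'d) \<times> (real^'d^'d)) set"
  assumes "1 < p" and "q = p / (p - 1)"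
    and "D \<subseteq> Ysym \<times> Ysym"
  shows "pq_coercive p q (distD p q D) \<longleftrightarrow>
    (\<exists>c1 c2. c2 > 0 \<and>
       D \<subseteq> {(e, s). e \<in> Ysym \<and> s \<in> Ysym \<and>
                  c1 * (e \<bullet> s) + c2 > norm e powr p + norm s powr q})"
proof
  assume "pq_coercive p q (distD p q D)"
  then obtain c1 c2
    where "\<And>e s. (e, s) \<in> D \<Longrightarrow> norm e powr p + norm s powr q < c1 * (e \<bullet> s) + c2"
      and "c2 > 0"
    using pq_coercive_distD_imp_sublevel assms(3) by metis
  then show "\<exists>c1 c2. c2 > 0 \<and> D \<subseteq> {(e, s). e \<in> Ysym \<and> s \<in> Ysym \<and>
      c1 * (e \<bullet> s) + c2 > norm e powr p + norm s powr q}"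
    using assms(3) by blast
next
  assume "\<exists>c1 c2. c2 > 0 \<and> D \<subseteq> {(e, s). e \<in> Ysym \<and> s \<in> Ysym \<and>
      c1 * (e \<bullet> s) + c2 > norm e powr p + norm s powr q}"
  then obtain c1 c2
    where "\<And>e s. (e, s) \<in> D \<Longrightarrow> norm e powr p + norm s powr q < c1 * (e \<bullet> s) + c2"
      and "c2 > 0"
    by blast
  moreover have "q > 1"
    using assms(1,2) by (simp add: less_divide_eq)
  moreover have "1/p + 1/q = 1"
    using assms(1,2) \<open>q > 1\<close> by (simp add: field_simps)
  ultimately show "pq_coercive p q (distD p q D)"
    using assms(1) by (intro sublevel_imp_pq_coercive_distD) auto
qed

end
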